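(* Let $t$ be an odd prime and let $n\geq 0$ be an integer such that $8n+1$ is a quadratic nonresidue modulo $t$. Then for every $0\leq i\leq t-1$, \[ \hat{N}_{t-1}(i,t,n)=\frac{\hat{p}_{t-1}(n)}{t}. \] In particular, $\hat{p}_{t-1}(n)\equiv 0\pmod t$.
   Context: A pod is a partition in which the odd parts are distinct (even parts may repeat); its generating function is $\prod_{k\ge1}(1+q^{2k-1})/(1-q^{2k})$. For a pod $\pi$, $\ell(\pi)$ denotes its total number of parts (odd and even). A $(t-1)$-colored pod of $n$ is a tuple $\overrightarrow{\pi}=(\pi_1,\dots,\pi_{t-1})$ of pods whose parts sum in total to $n$; $\hat{p}_{t-1}(n)$ denotes the number of such tuples. The multirank of such a tuple (with $t-1$ even) is \[ \overline{r}(\overrightarrow{\pi})=\sum_{k=1}^{(t-1)/2} k\bigl(\ell(\pi_k)-\ell(\pi_{t-k})\bigr), \] and $\hat{N}_{t-1}(i,t,n)$ denotes the number of $(t-1)$-colored pods of $n$ whose multirank $\overline{r}$ is congruent to $i$ modulo $t$. *)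

theory Defs
  imports "HOL-Library.Multiset" "HOL-Number_Theory.Number_Theory"
begin

definition is_pod :: "nat multiset \<Rightarrow> bool" where
  "is_pod \<pi> \<longleftrightarrow> (\<forall>x \<in># \<pi>. 0 < x) \<and> (\<forall>x. odd x \<longrightarrow> count \<pi> x \<le> 1)"

definition pod_len :: "nat multiset \<Rightarrow> nat" where
  "pod_len \<pi> = size \<pi>"

text \<open>c-colored pods of n: lists (pi_1,...,pi_c) of pods (pi_k = ps ! (k-1))
  whose parts sum in total to n.\<close>
definition colored_pods :: "nat \<Rightarrow> nat \<Rightarrow> nat multiset list set" where
  "colored_pods c n = {ps. length ps = c \<and> (\<forall>\<pi> \<in> set ps. is_pod \<pi>)
                           \<and> sum_list (map sum_mset ps) = n}"

definition p_hat :: "nat \<Rightarrow> nat \<Rightarrow> nat" where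
  "p_hat c n = card (colored_pods c n)"

definition multirank :: "nat \<Rightarrow> nat multiset list \<Rightarrow> int" where
  "multirank t ps = (\<Sum>k = 1..(t - 1) div 2.
       int k * (int (pod_len (ps ! (k - 1))) - int (pod_len (ps ! (t - k - 1)))))"

definition N_hat :: "int \<Rightarrow> nat \<Rightarrow> nat \<Rightarrow> nat" where
  "N_hat i t n = card {ps \<in> colored_pods (t - 1) n. [multirank t ps = i] (mod int t)}"

end

theory Submission
  imports Defs "HOL-Computational_Algebra.Polynomial_FPS"
    "HOL-Computational_Algebra.Fundamental_Theorem_Algebra"
begin

unbundle fps_syntax

text \<open>
  Let \<open>\<zeta>\<close> be a primitive \<open>t\<close>-th root of unity. By orthogonality of characters,
  \<open>t N(i, t, n) - p(n)\<close> is a combination of the sums \<open>\<Sum>\<^sub>\<pi> \<zeta>^(j r(\<pi>))\<close>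
  with \<open>0 < j < t\<close>.
  Since \<open>\<zeta>^(t - k) = \<zeta>^(-k)\<close>, such a sum is the coefficient of \<open>q^n\<close> in
  \<open>\<Prod>(k = 1..t-1) P(\<zeta>^(j k), q)\<close>, where
  \<open>P(x, q) = \<Prod>(m \<ge> 1) (1 + x q^(2m-1)) / (1 - x q^(2m))\<close>
  counts pods with \<open>x\<close> marking the number of parts. As \<open>t\<close> is prime, \<open>j k\<close> runs over all
  nonzero residues mod \<open>t\<close>, so this product is
  \<open>\<Prod>(z^t = 1) P(z, q) / P(1, q) = P(1, q^t) / P(1, q)\<close>.
  The numerator is a series in \<open>q^t\<close>, and by Gauss's identity
  \<open>1 / P(1, q) = \<Sum>(k \<ge> 0) (-q)^(k(k+1)/2)\<close> is supported on the triangular numbers. Hence the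
  coefficient of \<open>q^n\<close> vanishes unless \<open>n - t i = k(k+1)/2\<close> for some \<open>i, k\<close>, i.e. unless
  \<open>8n + 1 \<equiv> (2k + 1)^2 (mod t)\<close>, which the hypothesis on the Legendre symbol excludes.

  Gauss's identity is derived from a finite form of Jacobi's triple product in terms of Gaussian
  binomial coefficients. Power series identities are only needed up to \<open>q^n\<close>, so infinite
  products are replaced by finite ones agreeing with them up to that order.
\<close>

section \<open>Agreement of power series up to a given order\<close>

definition fps_eq_upto :: "nat \<Rightarrow> 'a fps \<Rightarrow> 'a fps \<Rightarrow> bool" where
  "fps_eq_upto N f g \<longleftrightarrow> (\<forall>k\<le>N. f $ k = g $ k)"

lemma fps_eq_upto_refl [simp]: "fps_eq_upto N f f"
  by (simp add: fps_eq_upto_def)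

lemma fps_eq_upto_sym: "fps_eq_upto N f g \<Longrightarrow> fps_eq_upto N g f"
  by (simp add: fps_eq_upto_def)

lemma fps_eq_upto_trans [trans]:
  "fps_eq_upto N f g \<Longrightarrow> fps_eq_upto N g h \<Longrightarrow> fps_eq_upto N f h"
  by (simp add: fps_eq_upto_def)

lemma fps_eq_upto_eq_trans [trans]: "f = g \<Longrightarrow> fps_eq_upto N g h \<Longrightarrow> fps_eq_upto N f h"
  and fps_eq_upto_trans_eq [trans]: "fps_eq_upto N f g \<Longrightarrow> g = h \<Longrightarrow> fps_eq_upto N f h"
  by simp_all

lemma fps_eq_upto_add:
  "fps_eq_upto N f f' \<Longrightarrow> fps_eq_upto N g g' \<Longrightarrow> fps_eq_upto N (f + g) (f' + g')"
  by (simp add: fps_eq_upto_def)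

lemma fps_eq_upto_diff:
  fixes f :: "'a::ab_group_add fps"
  shows "fps_eq_upto N f f' \<Longrightarrow> fps_eq_upto N g g' \<Longrightarrow> fps_eq_upto N (f - g) (f' - g')"
  by (simp add: fps_eq_upto_def)

lemma fps_eq_upto_mult:
  fixes f :: "'a::semiring_0 fps"
  shows "fps_eq_upto N f f' \<Longrightarrow> fps_eq_upto N g g' \<Longrightarrow> fps_eq_upto N (f * g) (f' * g')"
  unfolding fps_eq_upto_def fps_mult_nth by (auto intro!: sum.cong)

lemma fps_eq_upto_mult_left:
  fixes f :: "'a::semiring_0 fps"
  shows "fps_eq_upto N g g' \<Longrightarrow> fps_eq_upto N (f * g) (f * g')"
  by (rule fps_eq_upto_mult) auto

lemma fps_eq_upto_mult_right:
  fixes f :: "'a::semiring_0 fps"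
  shows "fps_eq_upto N f f' \<Longrightarrow> fps_eq_upto N (f * g) (f' * g)"
  by (rule fps_eq_upto_mult) auto

lemma fps_eq_upto_sum:
  "finite A \<Longrightarrow> (\<And>a. a \<in> A \<Longrightarrow> fps_eq_upto N (f a) (g a)) \<Longrightarrow>
     fps_eq_upto N (sum f A) (sum g A)"
  by (induction A rule: finite_induct) (auto intro: fps_eq_upto_add)

lemma fps_eq_upto_prod:
  fixes f :: "'b \<Rightarrow> 'a::comm_semiring_1 fps"
  shows "finite A \<Longrightarrow> (\<And>a. a \<in> A \<Longrightarrow> fps_eq_upto N (f a) (g a)) \<Longrightarrow>
     fps_eq_upto N (prod f A) (prod g A)"
  by (induction A rule: finite_induct) (auto intro: fps_eq_upto_mult)

lemma fps_eq_upto_X_power_mult: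
  fixes h :: "'a::comm_semiring_1 fps"
  shows "N < m \<Longrightarrow> fps_eq_upto N (fps_X ^ m * h) 0"
  by (simp add: fps_eq_upto_def fps_X_power_mult_nth)

lemma fps_eq_upto_one_plus_X_power:
  "N < m \<Longrightarrow> fps_eq_upto N (1 + fps_X ^ m) (1 :: 'a::comm_semiring_1 fps)"
  using fps_eq_upto_add[OF fps_eq_upto_refl fps_eq_upto_X_power_mult[of N m 1]] by simp

lemma fps_eq_upto_one_minus_X_power:
  "N < m \<Longrightarrow> fps_eq_upto N (1 - fps_X ^ m) (1 :: 'a::comm_ring_1 fps)"
  using fps_eq_upto_diff[OF fps_eq_upto_refl fps_eq_upto_X_power_mult[of N m 1]] by simp

lemma fps_eq_upto_cancel:
  fixes f :: "'a::field fps"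
  assumes "u $ 0 \<noteq> 0" "fps_eq_upto N (f * u) (g * u)"
  shows "fps_eq_upto N f g"
proof -
  have "fps_eq_upto N (f * u * inverse u) (g * u * inverse u)"
    by (rule fps_eq_upto_mult_right[OF assms(2)])
  thus ?thesis using inverse_mult_eq_1'[OF assms(1)] by (simp add: mult.assoc)
qed

lemma fps_prod_nth_0: "prod f A $ 0 = (\<Prod>a\<in>A. f a $ 0 :: 'a::comm_semiring_1)"
  by (induction A rule: infinite_finite_induct) auto

section \<open>q-Pochhammer symbols and Gaussian binomial coefficients\<close>

definition qpoch :: "nat \<Rightarrow> 'a::comm_ring_1 fps" where
  "qpoch m = (\<Prod>i\<in>{1..m}. 1 - fps_X ^ i)"

lemma qpoch_0 [simp]: "qpoch 0 = 1"
  by (simp add: qpoch_def)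

lemma qpoch_Suc: "qpoch (Suc m) = qpoch m * (1 - fps_X ^ Suc m)"
  by (simp add: qpoch_def prod.nat_ivl_Suc')

lemma qpoch_nth_0 [simp]: "qpoch m $ 0 = 1"
  by (induction m) (simp_all add: qpoch_Suc)

lemma qpoch_nonzero [simp]: "qpoch m \<noteq> 0"
  using qpoch_nth_0[of m] by (metis fps_zero_nth zero_neq_one)

lemma qpoch_eq_upto: "N \<le> a \<Longrightarrow> fps_eq_upto N (qpoch a) (qpoch N)"
proof (induction a rule: dec_induct)
  case (step k)
  have "fps_eq_upto N (qpoch k * (1 - fps_X ^ Suc k)) (qpoch N * 1 :: 'a fps)"
    using step fps_eq_upto_one_minus_X_power[of N "Suc k"] by (intro fps_eq_upto_mult) auto
  thus ?case by (simp add: qpoch_Suc)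
qed simp

fun qbinom :: "nat \<Rightarrow> nat \<Rightarrow> 'a::comm_ring_1 fps" where
  "qbinom 0 0 = 1"
| "qbinom 0 (Suc j) = 0"
| "qbinom (Suc m) 0 = 1"
| "qbinom (Suc m) (Suc j) = qbinom m j + fps_X ^ Suc j * qbinom m (Suc j)"

lemma qbinom_eq_0: "m < j \<Longrightarrow> qbinom m j = 0"
  by (induction m j rule: qbinom.induct) auto

lemma qbinom_0_right [simp]: "qbinom m 0 = 1"
  by (cases m) auto

lemma qbinom_mult_qpoch:
  "j \<le> m \<Longrightarrow> qbinom m j * qpoch j * qpoch (m - j) = qpoch m"
proof (induction m arbitrary: j)
  case (Suc m)
  show ?case
  proof (cases j)
    case (Suc i)
    with Suc.prems have im: "i \<le> m" by simp
    have first: "qbinom m i * qpoch (Suc i) * qpoch (m - i) = (qpoch m * (1 - fps_X ^ Suc i) :: 'a fps)"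
    proof -
      have "qbinom m i * qpoch (Suc i) * qpoch (m - i)
          = qbinom m i * qpoch i * qpoch (m - i) * (1 - fps_X ^ Suc i :: 'a fps)"
        by (simp add: qpoch_Suc mult_ac)
      thus ?thesis using Suc.IH[OF im] by simp
    qed
    have second: "fps_X ^ Suc i * qbinom m (Suc i) * qpoch (Suc i) * qpoch (m - i)
        = (fps_X ^ Suc i * qpoch m * (1 - fps_X ^ (m - i)) :: 'a fps)"
    proof (cases "i = m")
      case False
      then have "m - i = Suc (m - Suc i)" using im by simp
      then have "fps_X ^ Suc i * qbinom m (Suc i) * qpoch (Suc i) * qpoch (m - i) =
          fps_X ^ Suc i * (qbinom m (Suc i) * qpoch (Suc i) * qpoch (m - Suc i)) *
          (1 - fps_X ^ (m - i) :: 'a fps)"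
        by (simp only: qpoch_Suc mult.assoc)
      also have "qbinom m (Suc i) * qpoch (Suc i) * qpoch (m - Suc i) = (qpoch m :: 'a fps)"
        using Suc.IH False im by simp
      finally show ?thesis .
    qed (simp add: qbinom_eq_0)
    have "qbinom (Suc m) j * qpoch j * qpoch (Suc m - j) =
          (qbinom m i * qpoch (Suc i) * qpoch (m - i)
          + fps_X ^ Suc i * qbinom m (Suc i) * qpoch (Suc i) * qpoch (m - i) :: 'a fps)"
      using Suc by (simp add: algebra_simps)
    also have "\<dots> = qpoch m * (1 - fps_X ^ Suc i) + fps_X ^ Suc i * qpoch m * (1 - fps_X ^ (m - i))"
      by (simp only: first second)
    also have "\<dots> = qpoch m * (1 - fps_X ^ Suc m)"
      using im by (simp add: algebra_simps power_add[symmetric])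
    finally show ?thesis by (simp add: qpoch_Suc)
  qed simp
qed simp

lemma qbinom_Suc_Suc':
  "qbinom (Suc m) (Suc j) = fps_X ^ (m - j) * qbinom m j + (qbinom m (Suc j) :: 'a::idom fps)"
proof (cases "j \<le> m")
  case False thus ?thesis by (simp add: qbinom_eq_0)
next
  case jm: True
  define U :: "'a fps" where "U = qpoch (Suc j) * qpoch (m - j)"
  have lhs: "qbinom (Suc m) (Suc j) * U = qpoch (Suc m)"
    using qbinom_mult_qpoch[of "Suc j" "Suc m"] jm by (simp add: U_def mult.assoc)
  have first: "fps_X ^ (m - j) * qbinom m j * U = fps_X ^ (m - j) * qpoch m * (1 - fps_X ^ Suc j)"
  proof -
    have "fps_X ^ (m - j) * qbinom m j * U
        = fps_X ^ (m - j) * (qbinom m j * qpoch j * qpoch (m - j)) * (1 - fps_X ^ Suc j)"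
      by (simp add: U_def qpoch_Suc mult_ac)
    thus ?thesis by (simp only: qbinom_mult_qpoch[OF jm])
  qed
  have second: "qbinom m (Suc j) * U = qpoch m * (1 - fps_X ^ (m - j))"
  proof (cases "j = m")
    case False
    then have "m - j = Suc (m - Suc j)" using jm by simp
    then have "qbinom m (Suc j) * U =
        qbinom m (Suc j) * qpoch (Suc j) * qpoch (m - Suc j) * (1 - fps_X ^ (m - j))"
      by (simp only: U_def qpoch_Suc mult.assoc)
    also have "qbinom m (Suc j) * qpoch (Suc j) * qpoch (m - Suc j) = qpoch m"
      using qbinom_mult_qpoch[of "Suc j" m] False jm by simp
    finally show ?thesis .
  qed (simp add: qbinom_eq_0)
  have "(fps_X ^ (m - j) * qbinom m j + qbinom m (Suc j)) * U
      = fps_X ^ (m - j) * qpoch m * (1 - fps_X ^ Suc j) + qpoch m * (1 - fps_X ^ (m - j))"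
    using first second by (simp add: distrib_right)
  also have "\<dots> = qpoch m * (1 - fps_X ^ (m - j + Suc j))"
    by (simp add: algebra_simps power_add)
  also have "\<dots> = qpoch (Suc m)"
    using jm by (simp add: qpoch_Suc)
  finally have "(fps_X ^ (m - j) * qbinom m j + qbinom m (Suc j)) * U = qbinom (Suc m) (Suc j) * U"
    using lhs by simp
  moreover have "U \<noteq> 0" by (simp add: U_def)
  ultimately show ?thesis by simp
qed

lemma qbinom_Suc_Suc_Suc_Suc:
  "qbinom (Suc (Suc m)) (Suc (Suc j)) =
     fps_X ^ (m - j) * qbinom m j + (1 + fps_X ^ Suc m) * qbinom m (Suc j)
     + fps_X ^ Suc (Suc j) * (qbinom m (Suc (Suc j)) :: 'a::idom fps)"
proof -
  have "qbinom (Suc (Suc m)) (Suc (Suc j)) =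
      qbinom (Suc m) (Suc j) + fps_X ^ Suc (Suc j) * (qbinom (Suc m) (Suc (Suc j)) :: 'a fps)"
    by simp
  also have "qbinom (Suc m) (Suc j) = fps_X ^ (m - j) * qbinom m j + (qbinom m (Suc j) :: 'a fps)"
    by (rule qbinom_Suc_Suc')
  also have "qbinom (Suc m) (Suc (Suc j)) =
      fps_X ^ (m - Suc j) * qbinom m (Suc j) + (qbinom m (Suc (Suc j)) :: 'a fps)"
    by (rule qbinom_Suc_Suc')
  also have "fps_X ^ Suc (Suc j) * (fps_X ^ (m - Suc j) * qbinom m (Suc j)) =
        fps_X ^ Suc m * (qbinom m (Suc j) :: 'a fps)"
  proof (cases "Suc j \<le> m")
    case True
    hence "Suc (Suc j) + (m - Suc j) = Suc m" by simp
    thus ?thesis by (metis mult.assoc power_add)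
  qed (simp add: qbinom_eq_0)
  ultimately show ?thesis by (simp add: algebra_simps)
qed

lemma qbinom_Suc_Suc_1:
  "qbinom (Suc (Suc m)) (Suc 0) =
     (1 + fps_X ^ Suc m) * qbinom m 0 + fps_X * (qbinom m (Suc 0) :: 'a::idom fps)"
proof -
  have "qbinom (Suc (Suc m)) (Suc 0) = qbinom (Suc m) 0 + fps_X * (qbinom (Suc m) (Suc 0) :: 'a fps)"
    by simp
  also have "qbinom (Suc m) (Suc 0) = fps_X ^ m * qbinom m 0 + (qbinom m (Suc 0) :: 'a fps)"
    using qbinom_Suc_Suc'[of m 0] by simp
  finally show ?thesis by (simp add: algebra_simps)
qed

lemma qbinom_eq_upto_inverse_qpoch:
  assumes "N \<le> j" "N \<le> m - j" "j \<le> m"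
  shows "fps_eq_upto N (qbinom m j) (inverse (qpoch N) :: 'a::field fps)"
proof -
  have approx: "fps_eq_upto N (qpoch j) (qpoch N :: 'a fps)"
    "fps_eq_upto N (qpoch (m - j)) (qpoch N :: 'a fps)" "fps_eq_upto N (qpoch m) (qpoch N :: 'a fps)"
    using assms by (auto intro: qpoch_eq_upto)
  have "fps_eq_upto N (qbinom m j * (qpoch N * qpoch N))
      (qbinom m j * (qpoch j * qpoch (m - j)) :: 'a fps)"
    using approx(1,2) by (intro fps_eq_upto_mult_left fps_eq_upto_mult) (simp_all add: fps_eq_upto_sym)
  also have "qbinom m j * (qpoch j * qpoch (m - j)) = (qpoch m :: 'a fps)"
    using qbinom_mult_qpoch[OF assms(3)] by (simp add: mult.assoc)
  also note approx(3)
  also have "qpoch N = inverse (qpoch N) * (qpoch N * qpoch N :: 'a fps)"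
    by (simp add: inverse_mult_eq_1 mult.assoc[symmetric])
  finally show ?thesis by (rule fps_eq_upto_cancel[rotated]) simp
qed

section \<open>A finite form of Jacobi's triple product\<close>

definition triangular :: "int \<Rightarrow> nat" where
  "triangular k = nat (k * (k + 1) div 2)"

lemma int_mult_succ_nonneg: "0 \<le> (k::int) * (k + 1)"
  by (cases "k \<ge> 0") (auto intro: mult_nonneg_nonneg mult_nonpos_nonpos)

lemma double_triangular: "2 * int (triangular k) = k * (k + 1)"
proof -
  have "even (k * (k + 1))" by simp
  thus ?thesis using int_mult_succ_nonneg[of k] unfolding triangular_def by (auto elim!: evenE)
qed

lemma triangular_le_imp_bounds:
  assumes "triangular k \<le> N" shows "- int N - 1 \<le> k \<and> k \<le> int N"
proof -
  have "0 \<le> (k - 1) * k" using int_mult_succ_nonneg[of "k - 1"] by simp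
  moreover have "0 \<le> (k + 1) * (k + 2)" using int_mult_succ_nonneg[of "k + 1"] by (simp add: algebra_simps)
  moreover have "2 * int (triangular k) \<le> 2 * int N" using assms by simp
  ultimately show ?thesis using double_triangular[of k] by (simp add: algebra_simps)
qed

definition qbinom_centered :: "nat \<Rightarrow> int \<Rightarrow> 'a::comm_ring_1 fps" where
  "qbinom_centered n k = (if k + int n < 0 then 0 else qbinom (2 * n) (nat (k + int n)))"

lemma qbinom_centered_nonzero_imp:
  assumes "qbinom_centered n k \<noteq> 0" shows "- int n \<le> k \<and> k \<le> int n"
proof -
  have "\<not> k + int n < 0" and "qbinom (2 * n) (nat (k + int n)) \<noteq> (0 :: 'a fps)"
    using assms by (auto simp: qbinom_centered_def split: if_splits)
  thus ?thesis using qbinom_eq_0[of "2 * n" "nat (k + int n)"] by force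
qed

lemma qbinom_centered_eq_0: "k < - int n \<or> int n < k \<Longrightarrow> qbinom_centered n k = 0"
  using qbinom_centered_nonzero_imp by fastforce

lemma qbinom_centered_Suc:
  "qbinom_centered (Suc n) k =
     fps_X ^ nat (int n + 1 - k) * qbinom_centered n (k - 1)
     + (1 + fps_X ^ (2 * n + 1)) * qbinom_centered n k
     + fps_X ^ nat (k + int n + 1) * (qbinom_centered n (k + 1) :: 'a::idom fps)"
proof -
  consider "k + int n + 1 \<le> 0" | "k + int n + 1 = 1" | "k + int n + 1 \<ge> 2" by linarith
  thus ?thesis
  proof cases
    case 1 thus ?thesis by (simp add: qbinom_centered_def)
  next
    case 2
    hence "nat (k + int (Suc n)) = Suc 0" "nat (k + int n) = 0" "nat (k + 1 + int n) = Suc 0"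
      "nat (k + int n + 1) = 1" "2 * Suc n = Suc (Suc (2 * n))" by auto
    thus ?thesis using 2 qbinom_Suc_Suc_1[of "2 * n", where 'a = 'a]
      by (simp add: qbinom_centered_def algebra_simps)
  next
    case 3
    define j where "j = nat (k + int n - 1)"
    have idx: "nat (k + int (Suc n)) = Suc (Suc j)" "nat (k + int n) = Suc j" "nat (k - 1 + int n) = j"
      "nat (k + 1 + int n) = Suc (Suc j)" "nat (k + int n + 1) = Suc (Suc j)"
      "nat (k + (1 + int n)) = Suc (Suc j)"
      "nat (int n + 1 - k) = 2 * n - j" "2 * Suc n = Suc (Suc (2 * n))"
      using 3 by (auto simp: j_def)
    have "qbinom_centered (Suc n) k = (qbinom (Suc (Suc (2 * n))) (Suc (Suc j)) :: 'a fps)"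
      using 3 by (simp add: qbinom_centered_def idx)
    also have "\<dots> = fps_X ^ (2 * n - j) * qbinom (2 * n) j
        + (1 + fps_X ^ Suc (2 * n)) * qbinom (2 * n) (Suc j)
        + fps_X ^ Suc (Suc j) * qbinom (2 * n) (Suc (Suc j))"
      by (rule qbinom_Suc_Suc_Suc_Suc)
    also have "\<dots> = fps_X ^ nat (int n + 1 - k) * qbinom_centered n (k - 1)
        + (1 + fps_X ^ (2 * n + 1)) * qbinom_centered n k
        + fps_X ^ nat (k + int n + 1) * qbinom_centered n (k + 1)"
      using 3 by (simp add: qbinom_centered_def idx)
    finally show ?thesis .
  qed
qed

definition jacobi_term :: "nat \<Rightarrow> int \<Rightarrow> 'a::comm_ring_1 fps" where
  "jacobi_term n k = qbinom_centered n k * fps_X ^ triangular k"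

definition jacobi_sum :: "nat \<Rightarrow> 'a::comm_ring_1 fps" where
  "jacobi_sum n = (\<Sum>k\<in>{- int n..int n}. jacobi_term n k)"

lemma jacobi_sum_superset:
  "{- int n..int n} \<subseteq> J \<Longrightarrow> finite J \<Longrightarrow> (\<Sum>k\<in>J. jacobi_term n k) = jacobi_sum n"
  unfolding jacobi_sum_def
  by (rule sum.mono_neutral_right) (auto simp: jacobi_term_def qbinom_centered_eq_0)

lemma sum_int_interval_shift:
  "(\<Sum>k\<in>{a..b::int}. g (k + c)) = (\<Sum>k\<in>{a + c..b + c}. g k)"
  by (rule sum.reindex_bij_witness[where i = "\<lambda>k. k - c" and j = "\<lambda>k. k + c"]) auto

text \<open>Multiplying the Pascal recursion by \<open>q^T(k)\<close> shifts the exponents so that all three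
  terms become terms of the previous sum.\<close>

lemma jacobi_term_Suc:
  "jacobi_term (Suc n) k =
     fps_X ^ (n + 1) * jacobi_term n (k - 1) + (1 + fps_X ^ (2 * n + 1)) * jacobi_term n k
     + fps_X ^ n * (jacobi_term n (k + 1) :: 'a::idom fps)"
proof -
  have down: "fps_X ^ nat (int n + 1 - k) * qbinom_centered n (k - 1) * fps_X ^ triangular k =
      fps_X ^ (n + 1) * (jacobi_term n (k - 1) :: 'a fps)"
  proof (cases "qbinom_centered n (k - 1) = (0 :: 'a fps)")
    case False
    hence "- int n \<le> k - 1" "k - 1 \<le> int n" using qbinom_centered_nonzero_imp by blast+
    hence "nat (int n + 1 - k) + triangular k = n + 1 + triangular (k - 1)"
      using double_triangular[of k] double_triangular[of "k - 1"] by (simp add: algebra_simps)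
    thus ?thesis unfolding jacobi_term_def by (simp add: power_add[symmetric] algebra_simps)
  qed (simp add: jacobi_term_def)
  have up: "fps_X ^ nat (k + int n + 1) * qbinom_centered n (k + 1) * fps_X ^ triangular k =
      fps_X ^ n * (jacobi_term n (k + 1) :: 'a fps)"
  proof (cases "qbinom_centered n (k + 1) = (0 :: 'a fps)")
    case False
    hence "- int n \<le> k + 1" "k + 1 \<le> int n" using qbinom_centered_nonzero_imp by blast+
    hence "nat (k + int n + 1) + triangular k = n + triangular (k + 1)"
      using double_triangular[of k] double_triangular[of "k + 1"] by (simp add: algebra_simps)
    thus ?thesis unfolding jacobi_term_def by (simp add: power_add[symmetric] algebra_simps)
  qed (simp add: jacobi_term_def)
  have "jacobi_term (Suc n) k =
      fps_X ^ nat (int n + 1 - k) * qbinom_centered n (k - 1) * fps_X ^ triangular k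
      + (1 + fps_X ^ (2 * n + 1)) * (qbinom_centered n k * fps_X ^ triangular k)
      + fps_X ^ nat (k + int n + 1) * qbinom_centered n (k + 1) * (fps_X ^ triangular k :: 'a fps)"
    unfolding jacobi_term_def qbinom_centered_Suc by (simp add: algebra_simps)
  also have "\<dots> = fps_X ^ (n + 1) * jacobi_term n (k - 1) + (1 + fps_X ^ (2 * n + 1)) * jacobi_term n k
      + fps_X ^ n * jacobi_term n (k + 1)"
    by (simp only: down up jacobi_term_def)
  finally show ?thesis .
qed

lemma jacobi_sum_eq_prod:
  "jacobi_sum n = (\<Prod>i\<in>{1..n}. (1 + fps_X ^ i) * (1 + fps_X ^ (i - 1)) :: 'a::idom fps)"
proof (induction n)
  case 0 thus ?case by (simp add: jacobi_sum_def jacobi_term_def qbinom_centered_def triangular_def)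
next
  case (Suc n)
  let ?I = "{- int (Suc n)..int (Suc n)}"
  have shifted: "(\<Sum>k\<in>?I. jacobi_term n (k + c)) = (jacobi_sum n :: 'a fps)" if "\<bar>c\<bar> \<le> 1" for c
    using that by (subst sum_int_interval_shift, intro jacobi_sum_superset) auto
  have "jacobi_sum (Suc n) = (\<Sum>k\<in>?I. fps_X ^ (n + 1) * jacobi_term n (k + (-1))
      + (1 + fps_X ^ (2 * n + 1)) * jacobi_term n (k + 0) + fps_X ^ n * (jacobi_term n (k + 1) :: 'a fps))"
    unfolding jacobi_sum_def by (intro sum.cong refl) (simp add: jacobi_term_Suc)
  also have "\<dots> = fps_X ^ (n + 1) * jacobi_sum n + (1 + fps_X ^ (2 * n + 1)) * jacobi_sum n
      + fps_X ^ n * jacobi_sum n"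
    by (simp only: sum.distrib sum_distrib_left[symmetric] shifted abs_minus_cancel)
  also have "\<dots> = jacobi_sum n * ((1 + fps_X ^ Suc n) * (1 + fps_X ^ (Suc n - 1)))"
    by (simp add: algebra_simps power_add[symmetric] mult_2)
  finally show ?case using Suc.IH by (simp add: prod.nat_ivl_Suc')
qed

section \<open>Gauss's identity for the triangular numbers, up to any order\<close>

definition theta_sum :: "nat \<Rightarrow> 'a::comm_ring_1 fps" where
  "theta_sum n = (\<Sum>k\<in>{- int n..int n}. fps_X ^ triangular k)"

lemma theta_sum_nth_nonzero_imp: "theta_sum n $ m \<noteq> 0 \<Longrightarrow> \<exists>k. m = triangular k"
  by (force simp: theta_sum_def fps_sum_nth intro: ccontr sum.neutral)

lemma jacobi_sum_eq_upto_theta_sum: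
  assumes "2 * N + 2 \<le> n"
  shows "fps_eq_upto N (jacobi_sum n) (inverse (qpoch N) * theta_sum n :: 'a::field fps)"
  unfolding jacobi_sum_def theta_sum_def sum_distrib_left
proof (rule fps_eq_upto_sum, simp)
  fix k assume "k \<in> {- int n..int n}"
  show "fps_eq_upto N (jacobi_term n k) (inverse (qpoch N) * fps_X ^ triangular k :: 'a fps)"
  proof (cases "triangular k \<le> N")
    case False
    hence "fps_eq_upto N (jacobi_term n k) (0 :: 'a fps)"
      "fps_eq_upto N (inverse (qpoch N) * fps_X ^ triangular k) (0 :: 'a fps)"
      unfolding jacobi_term_def using fps_eq_upto_X_power_mult[of N "triangular k"]
      by (simp_all add: mult.commute)
    thus ?thesis by (meson fps_eq_upto_sym fps_eq_upto_trans)
  next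
    case True
    note k = triangular_le_imp_bounds[OF True]
    have "fps_eq_upto N (qbinom (2 * n) (nat (k + int n))) (inverse (qpoch N) :: 'a fps)"
      by (rule qbinom_eq_upto_inverse_qpoch) (use k assms in linarith)+
    moreover have "qbinom_centered n k = (qbinom (2 * n) (nat (k + int n)) :: 'a fps)"
      using k assms by (simp add: qbinom_centered_def)
    ultimately show ?thesis unfolding jacobi_term_def by (simp add: fps_eq_upto_mult_right)
  qed
qed

definition neg_qpoch :: "nat \<Rightarrow> 'a::comm_ring_1 fps" where
  "neg_qpoch m = (\<Prod>i\<in>{1..m}. 1 + fps_X ^ i)"

definition odd_qpoch :: "nat \<Rightarrow> 'a::comm_ring_1 fps" where
  "odd_qpoch m = (\<Prod>i\<in>{1..m}. 1 - fps_X ^ (2 * i - 1))"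

definition even_qpoch :: "nat \<Rightarrow> 'a::comm_ring_1 fps" where
  "even_qpoch m = (\<Prod>i\<in>{1..m}. 1 - fps_X ^ (2 * i))"

lemma neg_qpoch_Suc: "neg_qpoch (Suc m) = neg_qpoch m * (1 + fps_X ^ Suc m)"
  by (simp add: neg_qpoch_def prod.nat_ivl_Suc')

lemma neg_qpoch_eq_upto: "N \<le> a \<Longrightarrow> fps_eq_upto N (neg_qpoch a) (neg_qpoch N)"
proof (induction a rule: dec_induct)
  case (step k)
  have "fps_eq_upto N (neg_qpoch k * (1 + fps_X ^ Suc k)) (neg_qpoch N * 1 :: 'a fps)"
    using step fps_eq_upto_one_plus_X_power[of N "Suc k"] by (intro fps_eq_upto_mult) auto
  thus ?case by (simp add: neg_qpoch_Suc)
qed simp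

lemma jacobi_sum_eq_neg_qpoch:
  assumes "1 \<le> n" shows "jacobi_sum n = (2 * neg_qpoch n * neg_qpoch (n - 1) :: 'a::idom fps)"
proof -
  have "(\<Prod>i\<in>{0..m}. 1 + fps_X ^ i) = (2 * neg_qpoch m :: 'a fps)" for m
    by (induction m) (simp_all add: neg_qpoch_def prod.nat_ivl_Suc' mult_ac)
  moreover have "(\<Prod>i\<in>{1..n}. 1 + fps_X ^ (i - 1)) = (\<Prod>i\<in>{0..n - 1}. 1 + fps_X ^ i :: 'a fps)"
    using assms by (intro prod.reindex_bij_witness[where i = "\<lambda>i. i + 1" and j = "\<lambda>i. i - 1"]) auto
  ultimately show ?thesis
    by (simp add: jacobi_sum_eq_prod neg_qpoch_def prod.distrib mult_ac)
qed

lemma prod_odd_even_split: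
  fixes m :: nat
  shows "(\<Prod>s\<in>{1..2 * m}. f s) = (\<Prod>i\<in>{1..m}. f (2 * i - 1)) * (\<Prod>i\<in>{1..m}. f (2 * i) :: 'a::comm_monoid_mult)"
proof (induction m)
  case (Suc m)
  have "{1..2 * Suc m} = insert (Suc (Suc (2 * m))) (insert (Suc (2 * m)) {1..2 * m})" by auto
  thus ?case using Suc by (simp add: prod.nat_ivl_Suc' mult_ac)
qed simp

lemma qpoch_double: "qpoch (2 * m) = odd_qpoch m * even_qpoch m"
  unfolding qpoch_def odd_qpoch_def even_qpoch_def by (rule prod_odd_even_split)

lemma neg_qpoch_mult_qpoch: "neg_qpoch m * qpoch m = even_qpoch m"
  unfolding neg_qpoch_def qpoch_def even_qpoch_def prod.distrib[symmetric]
  by (intro prod.cong refl) (simp add: algebra_simps power_add[symmetric] mult_2_right)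

lemma even_qpoch_nth_0 [simp]: "even_qpoch m $ 0 = 1"
  by (simp add: even_qpoch_def fps_prod_nth_0)

lemma odd_qpoch_mult_neg_qpoch_eq_upto:
  assumes "N \<le> m" shows "fps_eq_upto N (odd_qpoch m * neg_qpoch m) (1 :: 'a::field fps)"
proof -
  have "fps_eq_upto N (qpoch (2 * m)) (qpoch m :: 'a fps)"
    using qpoch_eq_upto[of N "2 * m"] qpoch_eq_upto[of N m] assms
    by (metis fps_eq_upto_sym fps_eq_upto_trans le_trans mult_le_mono1 mult_1 one_le_numeral)
  hence "fps_eq_upto N (neg_qpoch m * qpoch (2 * m)) (neg_qpoch m * qpoch m :: 'a fps)"
    by (rule fps_eq_upto_mult_left)
  hence "fps_eq_upto N (odd_qpoch m * neg_qpoch m * even_qpoch m) (1 * even_qpoch m :: 'a fps)"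
    unfolding qpoch_double neg_qpoch_mult_qpoch by (simp add: mult_ac)
  thus ?thesis by (rule fps_eq_upto_cancel[rotated]) simp
qed

lemma theta_sum_eq_upto:
  assumes "N \<le> m" "2 * N + 2 \<le> n"
  shows "fps_eq_upto N (theta_sum n) (2 * neg_qpoch m * even_qpoch m :: 'a::field fps)"
proof -
  have "fps_eq_upto N (neg_qpoch N) (neg_qpoch n :: 'a fps)"
    "fps_eq_upto N (neg_qpoch N) (neg_qpoch (n - 1) :: 'a fps)"
    using assms by (auto intro!: fps_eq_upto_sym[OF neg_qpoch_eq_upto])
  hence "fps_eq_upto N (2 * neg_qpoch N * neg_qpoch N) (2 * neg_qpoch n * neg_qpoch (n - 1) :: 'a fps)"
    by (intro fps_eq_upto_mult fps_eq_upto_refl)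
  also have "2 * neg_qpoch n * neg_qpoch (n - 1) = (jacobi_sum n :: 'a fps)"
    using assms by (intro jacobi_sum_eq_neg_qpoch[symmetric]) simp
  also have "fps_eq_upto N (jacobi_sum n) (inverse (qpoch N) * theta_sum n :: 'a fps)"
    using assms(2) by (rule jacobi_sum_eq_upto_theta_sum)
  finally have "fps_eq_upto N (2 * neg_qpoch N * neg_qpoch N * qpoch N)
      (inverse (qpoch N) * theta_sum n * qpoch N :: 'a fps)"
    by (rule fps_eq_upto_mult_right)
  also have "inverse (qpoch N) * theta_sum n * qpoch N = (theta_sum n :: 'a fps)"
    using inverse_mult_eq_1[of "qpoch N :: 'a fps"] by (simp add: mult_ac)
  finally have "fps_eq_upto N (theta_sum n) (2 * neg_qpoch N * neg_qpoch N * qpoch N :: 'a fps)"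
    by (rule fps_eq_upto_sym)
  also have "fps_eq_upto N (2 * neg_qpoch N * neg_qpoch N * qpoch N)
      (2 * neg_qpoch m * neg_qpoch m * qpoch m :: 'a fps)"
    using assms(1)
    by (intro fps_eq_upto_mult fps_eq_upto_refl)
      (simp_all add: fps_eq_upto_sym neg_qpoch_eq_upto qpoch_eq_upto)
  also have "2 * neg_qpoch m * neg_qpoch m * qpoch m = 2 * neg_qpoch m * (even_qpoch m :: 'a fps)"
    by (simp add: neg_qpoch_mult_qpoch mult.assoc)
  finally show ?thesis .
qed

lemma gauss_identity_eq_upto:
  assumes "N \<le> m" "2 * N + 2 \<le> n"
  shows "fps_eq_upto N (odd_qpoch m * theta_sum n) (2 * even_qpoch m :: 'a::field fps)"
proof -
  have "fps_eq_upto N (odd_qpoch m * theta_sum n)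
      (odd_qpoch m * (2 * neg_qpoch m * even_qpoch m) :: 'a fps)"
    using assms by (intro fps_eq_upto_mult_left theta_sum_eq_upto)
  also have "odd_qpoch m * (2 * neg_qpoch m * even_qpoch m) =
      2 * even_qpoch m * (odd_qpoch m * neg_qpoch m :: 'a fps)"
    by (simp add: mult_ac)
  also have "fps_eq_upto N (2 * even_qpoch m * (odd_qpoch m * neg_qpoch m)) (2 * even_qpoch m * 1 :: 'a fps)"
    using assms(1) by (intro fps_eq_upto_mult_left odd_qpoch_mult_neg_qpoch_eq_upto)
  finally show ?thesis by simp
qed

section \<open>The generating function of pods weighted by their number of parts\<close>

lemma size_le_sum_mset: "(\<forall>y\<in>#\<pi>. 0 < y) \<Longrightarrow> size \<pi> \<le> sum_mset (\<pi> :: nat multiset)"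
  by (induction \<pi>) auto

lemma member_le_sum_mset: "y \<in># \<pi> \<Longrightarrow> y \<le> sum_mset (\<pi> :: nat multiset)"
  by (induction \<pi>) auto

lemma finite_positive_msets_sum_eq:
  "finite {\<pi> :: nat multiset. (\<forall>y\<in>#\<pi>. 0 < y) \<and> sum_mset \<pi> = n}"
proof (rule finite_subset)
  show "{\<pi> :: nat multiset. (\<forall>y\<in>#\<pi>. 0 < y) \<and> sum_mset \<pi> = n} \<subseteq>
      (\<Union>k\<in>{0..n}. multisets_of_size {1..n} k)"
    using size_le_sum_mset member_le_sum_mset by (fastforce simp: multisets_of_size_def)
qed auto

definition pods :: "nat \<Rightarrow> nat multiset set" where
  "pods n = {\<pi>. is_pod \<pi> \<and> sum_mset \<pi> = n}"

definition pods_bounded :: "nat \<Rightarrow> nat \<Rightarrow> nat multiset set" where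
  "pods_bounded L n = {\<pi>. is_pod \<pi> \<and> (\<forall>y\<in>#\<pi>. y \<le> L) \<and> sum_mset \<pi> = n}"

lemma finite_pods: "finite (pods n)"
  by (rule finite_subset[OF _ finite_positive_msets_sum_eq[of n]]) (auto simp: pods_def is_pod_def)

lemma finite_pods_bounded: "finite (pods_bounded L n)"
  by (rule finite_subset[OF _ finite_positive_msets_sum_eq[of n]])
    (auto simp: pods_bounded_def is_pod_def)

lemma pods_bounded_eq_pods: "n \<le> L \<Longrightarrow> pods_bounded L n = pods n"
  by (auto simp: pods_bounded_def pods_def dest: member_le_sum_mset)

lemma pods_bounded_0: "pods_bounded 0 n = (if n = 0 then {{#}} else {})"
proof -
  have "\<pi> \<in> pods_bounded 0 n \<longleftrightarrow> \<pi> = {#} \<and> n = 0" for \<pi>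
  proof
    assume "\<pi> \<in> pods_bounded 0 n"
    hence "\<forall>y\<in>#\<pi>. 0 < y \<and> y \<le> 0" and "sum_mset \<pi> = n"
      by (simp_all add: pods_bounded_def is_pod_def)
    moreover from this(1) have "\<pi> = {#}" by (metis multiset_nonemptyE not_le)
    ultimately show "\<pi> = {#} \<and> n = 0" by simp
  qed (simp add: pods_bounded_def is_pod_def)
  thus ?thesis by auto
qed

text \<open>Removing all parts equal to \<open>s = L + 1\<close> from a pod with parts at most \<open>s\<close>; the
  part \<open>s\<close> may occur at most once when it is odd.\<close>

lemma sum_pods_bounded_Suc:
  fixes x :: "'a::comm_semiring_1" and L n :: nat
  defines "s \<equiv> Suc L"
  defines "C \<equiv> {c. c * s \<le> n \<and> (odd s \<longrightarrow> c \<le> 1)}"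
  shows "(\<Sum>\<pi>\<in>pods_bounded (Suc L) n. x ^ size \<pi>) =
         (\<Sum>(c, \<pi>)\<in>Sigma C (\<lambda>c. pods_bounded L (n - c * s)). x ^ (size \<pi> + c))"
proof (rule sum.reindex_bij_witness[where j = "\<lambda>\<pi>. (count \<pi> s, \<pi> - replicate_mset (count \<pi> s) s)"
      and i = "\<lambda>(c, \<pi>). \<pi> + replicate_mset c s"])
  fix \<pi> assume pod: "\<pi> \<in> pods_bounded (Suc L) n"
  let ?c = "count \<pi> s" and ?r = "\<pi> - replicate_mset (count \<pi> s) s"
  have decomp: "\<pi> = ?r + replicate_mset ?c s" by (rule multiset_eqI) simp
  then show "(\<lambda>(c, \<pi>). \<pi> + replicate_mset c s) (?c, ?r) = \<pi>" by simp
  have "size ?r + ?c = size \<pi>"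
    by (subst (3) decomp) simp
  then show "(\<lambda>(c, \<pi>). x ^ (size \<pi> + c)) (?c, ?r) = x ^ size \<pi>" by simp
  have sum: "sum_mset \<pi> = sum_mset ?r + ?c * s"
    by (subst decomp) (simp add: sum_mset_replicate_mset)
  have "\<forall>y\<in>#?r. y \<le> L"
  proof
    fix y assume "y \<in># ?r"
    moreover have "count ?r s = 0" by simp
    ultimately have "y \<noteq> s" "y \<in># \<pi>" by (metis count_eq_zero_iff, meson in_diffD)
    thus "y \<le> L" using pod by (auto simp: pods_bounded_def s_def)
  qed
  moreover have "is_pod ?r" using pod unfolding pods_bounded_def is_pod_def
    by (auto dest: in_diffD)
  ultimately have "?r \<in> pods_bounded L (n - ?c * s)"
    using pod sum by (auto simp: pods_bounded_def)
  moreover have "odd s \<longrightarrow> ?c \<le> 1" using pod by (simp add: pods_bounded_def is_pod_def)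
  ultimately show "(?c, ?r) \<in> Sigma C (\<lambda>c. pods_bounded L (n - c * s))"
    using pod sum by (simp add: C_def pods_bounded_def)
next
  fix p assume "p \<in> Sigma C (\<lambda>c. pods_bounded L (n - c * s))"
  then obtain c \<pi> where p: "p = (c, \<pi>)" and c: "c * s \<le> n" "odd s \<longrightarrow> c \<le> 1"
    and pod: "\<pi> \<in> pods_bounded L (n - c * s)"
    by (auto simp: C_def)
  have "count \<pi> s = 0" using pod by (auto simp: pods_bounded_def s_def count_eq_zero_iff)
  then show "(count ((\<lambda>(c, \<pi>). \<pi> + replicate_mset c s) p) s,
       (\<lambda>(c, \<pi>). \<pi> + replicate_mset c s) p -
       replicate_mset (count ((\<lambda>(c, \<pi>). \<pi> + replicate_mset c s) p) s) s) = p"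
    using p by simp
  have "is_pod (\<pi> + replicate_mset c s)"
    using pod c \<open>count \<pi> s = 0\<close> unfolding pods_bounded_def is_pod_def by (auto simp: s_def)
  then show "(\<lambda>(c, \<pi>). \<pi> + replicate_mset c s) p \<in> pods_bounded (Suc L) n"
    using p pod c by (auto simp: pods_bounded_def s_def)
qed

definition pod_factor :: "'a::comm_semiring_1 \<Rightarrow> nat \<Rightarrow> 'a fps" where
  "pod_factor x s = Abs_fps (\<lambda>i. if s dvd i \<and> (odd s \<longrightarrow> i div s \<le> 1) then x ^ (i div s) else 0)"

definition pod_prod :: "'a::comm_semiring_1 \<Rightarrow> nat \<Rightarrow> 'a fps" where
  "pod_prod x L = (\<Prod>s\<in>{1..L}. pod_factor x s)"

lemma pod_factor_nth:
  "pod_factor x s $ i = (if s dvd i \<and> (odd s \<longrightarrow> i div s \<le> 1) then x ^ (i div s) else 0)"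
  by (simp add: pod_factor_def)

lemma pod_factor_odd:
  assumes "odd s" shows "pod_factor x s = 1 + fps_const x * fps_X ^ s"
proof (rule fps_ext)
  fix i
  have "0 < s" using assms by (cases s) auto
  have "(s dvd i \<and> i div s \<le> 1) \<longleftrightarrow> (i = 0 \<or> i = s)"
  proof
    assume "s dvd i \<and> i div s \<le> 1"
    then obtain k where "i = s * k" "k \<le> 1" using \<open>0 < s\<close> by auto
    thus "i = 0 \<or> i = s" by (cases k) auto
  qed (use \<open>0 < s\<close> in auto)
  thus "pod_factor x s $ i = (1 + fps_const x * fps_X ^ s) $ i"
    using \<open>0 < s\<close> assms by (auto simp: pod_factor_nth)
qed

lemma pod_factor_even:
  fixes x :: "'a::comm_ring_1"
  assumes "even s" "0 < s" shows "pod_factor x s * (1 - fps_const x * fps_X ^ s) = 1"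
proof (rule fps_ext)
  fix i
  let ?f = "pod_factor x s"
  have "?f * (1 - fps_const x * fps_X ^ s) = ?f - fps_const x * (fps_X ^ s * ?f)"
    by (simp add: algebra_simps)
  hence "(?f * (1 - fps_const x * fps_X ^ s)) $ i = ?f $ i - x * (if i < s then 0 else ?f $ (i - s))"
    by (simp add: fps_X_power_mult_nth)
  also have "\<dots> = (if i = 0 then 1 else 0)"
  proof (cases "i < s")
    case True
    thus ?thesis using assms by (cases "i = 0") (auto simp: pod_factor_nth dest: dvd_imp_le)
  next
    case False
    hence "s dvd i \<longleftrightarrow> s dvd (i - s)" by (simp add: dvd_minus_self)
    moreover have "i div s = Suc ((i - s) div s)"
    proof -
      have "i = (i - s) + s" using False by simp
      thus ?thesis using assms(2) by (metis div_add_self2 less_numeral_extra(3) plus_1_eq_Suc add.commute)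
    qed
    ultimately show ?thesis using False assms by (auto simp: pod_factor_nth)
  qed
  finally show "(?f * (1 - fps_const x * fps_X ^ s)) $ i = 1 $ i" by simp
qed

lemma pod_factor_mult_nth:
  assumes "0 < s"
  shows "(pod_factor x s * f) $ n = (\<Sum>c | c * s \<le> n \<and> (odd s \<longrightarrow> c \<le> 1). x ^ c * f $ (n - c * s))"
proof -
  define C where "C = {c. c * s \<le> n \<and> (odd s \<longrightarrow> c \<le> 1)}"
  have "(pod_factor x s * f) $ n = (\<Sum>i=0..n. pod_factor x s $ i * f $ (n - i))"
    by (rule fps_mult_nth)
  also have "\<dots> = (\<Sum>i\<in>(\<lambda>c. c * s) ` C. pod_factor x s $ i * f $ (n - i))"
  proof (rule sum.mono_neutral_right)
    show "(\<lambda>c. c * s) ` C \<subseteq> {0..n}" by (auto simp: C_def)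
    show "\<forall>i\<in>{0..n} - (\<lambda>c. c * s) ` C. pod_factor x s $ i * f $ (n - i) = 0"
    proof
      fix i assume i: "i \<in> {0..n} - (\<lambda>c. c * s) ` C"
      show "pod_factor x s $ i * f $ (n - i) = 0"
      proof (cases "s dvd i")
        case True
        then obtain c where c: "i = c * s" by (metis dvd_def mult.commute)
        with i have "\<not> (odd s \<longrightarrow> c \<le> 1)" by (auto simp: C_def)
        thus ?thesis using c assms by (simp add: pod_factor_nth)
      qed (simp add: pod_factor_nth)
    qed
  qed simp
  also have "\<dots> = (\<Sum>c\<in>C. x ^ c * f $ (n - c * s))"
    using assms by (subst sum.reindex) (auto simp: inj_on_def C_def pod_factor_nth)
  finally show ?thesis by (simp add: C_def)
qed

lemma pod_prod_nth: "pod_prod x L $ n = (\<Sum>\<pi>\<in>pods_bounded L n. x ^ size \<pi>)"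
proof (induction L arbitrary: n)
  case 0
  show ?case by (cases n) (simp_all add: pod_prod_def pods_bounded_0)
next
  case (Suc L)
  define s where "s = Suc L"
  define C where "C = {c. c * s \<le> n \<and> (odd s \<longrightarrow> c \<le> 1)}"
  have "c \<le> n" if "c \<in> C" for c
    using that order.trans[of c "c * s" n] by (auto simp: C_def s_def)
  hence "C \<subseteq> {0..n}" by auto
  hence "finite C" by (rule finite_subset) simp
  have "pod_prod x (Suc L) $ n = (pod_factor x s * pod_prod x L) $ n"
    by (simp add: pod_prod_def prod.nat_ivl_Suc' s_def mult.commute)
  also have "\<dots> = (\<Sum>c\<in>C. x ^ c * pod_prod x L $ (n - c * s))"
    unfolding C_def by (rule pod_factor_mult_nth) (simp add: s_def)
  also have "\<dots> = (\<Sum>c\<in>C. \<Sum>\<pi>\<in>pods_bounded L (n - c * s). x ^ (size \<pi> + c))"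
    by (simp add: Suc.IH sum_distrib_left power_add mult.commute)
  also have "\<dots> = (\<Sum>(c, \<pi>)\<in>Sigma C (\<lambda>c. pods_bounded L (n - c * s)). x ^ (size \<pi> + c))"
    using \<open>finite C\<close> finite_pods_bounded by (simp add: sum.Sigma)
  also have "\<dots> = (\<Sum>\<pi>\<in>pods_bounded (Suc L) n. x ^ size \<pi>)"
    unfolding C_def s_def by (rule sum_pods_bounded_Suc[symmetric])
  finally show ?case .
qed

definition pod_gf :: "'a::comm_semiring_1 \<Rightarrow> 'a fps" where
  "pod_gf x = Abs_fps (\<lambda>n. \<Sum>\<pi>\<in>pods n. x ^ size \<pi>)"

lemma pod_gf_eq_upto_pod_prod: "N \<le> L \<Longrightarrow> fps_eq_upto N (pod_gf x) (pod_prod x L)"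
  by (auto simp: fps_eq_upto_def pod_gf_def pod_prod_nth pods_bounded_eq_pods)

lemma finite_colored_pods: "finite (colored_pods c n)"
proof (rule finite_subset)
  let ?P = "\<Union>i\<in>{0..n}. pods i"
  show "colored_pods c n \<subseteq> {xs. set xs \<subseteq> ?P \<and> length xs = c}"
  proof safe
    fix ps \<pi> assume ps: "ps \<in> colored_pods c n" and "\<pi> \<in> set ps"
    hence "sum_mset \<pi> \<le> sum_list (map sum_mset ps)" by (simp add: member_le_sum_list)
    thus "\<pi> \<in> ?P" using ps \<open>\<pi> \<in> set ps\<close> by (auto simp: colored_pods_def pods_def)
  qed (simp add: colored_pods_def)
  show "finite {xs. set xs \<subseteq> ?P \<and> length xs = c}"
    by (rule finite_lists_length_eq) (simp add: finite_pods)
qed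

lemma sum_colored_pods_Suc:
  fixes w :: "nat \<Rightarrow> 'a::comm_semiring_1"
  shows "(\<Sum>ps\<in>colored_pods (Suc c) n. \<Prod>k<Suc c. w k ^ size (ps ! k)) =
   (\<Sum>(i, \<pi>, qs)\<in>Sigma {0..n} (\<lambda>i. pods i \<times> colored_pods c (n - i)).
        w 0 ^ size \<pi> * (\<Prod>k<c. w (Suc k) ^ size (qs ! k)))"
proof (rule sum.reindex_bij_witness[where j = "\<lambda>ps. (sum_mset (hd ps), hd ps, tl ps)"
      and i = "\<lambda>(i, \<pi>, qs). \<pi> # qs"])
  fix ps assume ps: "ps \<in> colored_pods (Suc c) n"
  then obtain \<pi> qs where ps_eq: "ps = \<pi> # qs" by (cases ps) (auto simp: colored_pods_def)
  show "(\<lambda>(i, \<pi>, qs). \<pi> # qs) (sum_mset (hd ps), hd ps, tl ps) = ps"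
    using ps_eq by simp
  show "(sum_mset (hd ps), hd ps, tl ps) \<in> Sigma {0..n} (\<lambda>i. pods i \<times> colored_pods c (n - i))"
    using ps ps_eq by (auto simp: colored_pods_def pods_def)
  show "(\<lambda>(i, \<pi>, qs). w 0 ^ size \<pi> * (\<Prod>k<c. w (Suc k) ^ size (qs ! k)))
      (sum_mset (hd ps), hd ps, tl ps) = (\<Prod>k<Suc c. w k ^ size (ps ! k))"
    using ps_eq by (simp only: prod.lessThan_Suc_shift nth_Cons_0 nth_Cons_Suc list.sel prod.case)
next
  fix p assume "p \<in> Sigma {0..n} (\<lambda>i. pods i \<times> colored_pods c (n - i))"
  then show "(sum_mset (hd ((\<lambda>(i, \<pi>, qs). \<pi> # qs) p)), hd ((\<lambda>(i, \<pi>, qs). \<pi> # qs) p),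
        tl ((\<lambda>(i, \<pi>, qs). \<pi> # qs) p)) = p"
    and "(\<lambda>(i, \<pi>, qs). \<pi> # qs) p \<in> colored_pods (Suc c) n"
    by (auto simp: pods_def colored_pods_def)
qed

lemma sum_colored_pods_eq_nth_prod_pod_gf:
  fixes w :: "nat \<Rightarrow> 'a::comm_semiring_1"
  shows "(\<Sum>ps\<in>colored_pods c n. \<Prod>k<c. w k ^ size (ps ! k)) = (\<Prod>k<c. pod_gf (w k)) $ n"
proof (induction c arbitrary: w n)
  case 0
  have "colored_pods 0 n = (if n = 0 then {[]} else {})" by (auto simp: colored_pods_def)
  thus ?case by simp
next
  case (Suc c)
  have "(\<Prod>k<Suc c. pod_gf (w k)) $ n = (pod_gf (w 0) * (\<Prod>k<c. pod_gf (w (Suc k)))) $ n"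
    by (simp only: prod.lessThan_Suc_shift)
  also have "\<dots> = (\<Sum>i=0..n. (\<Sum>\<pi>\<in>pods i. w 0 ^ size \<pi>) *
      (\<Sum>qs\<in>colored_pods c (n - i). \<Prod>k<c. w (Suc k) ^ size (qs ! k)))"
    by (simp only: fps_mult_nth Suc.IH[of "\<lambda>k. w (Suc k)", symmetric]) (simp add: pod_gf_def)
  also have "\<dots> = (\<Sum>i\<in>{0..n}. \<Sum>(\<pi>, qs)\<in>pods i \<times> colored_pods c (n - i).
      w 0 ^ size \<pi> * (\<Prod>k<c. w (Suc k) ^ size (qs ! k)))"
    by (simp add: sum_product sum.cartesian_product)
  also have "\<dots> = (\<Sum>(i, \<pi>, qs)\<in>Sigma {0..n} (\<lambda>i. pods i \<times> colored_pods c (n - i)).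
      w 0 ^ size \<pi> * (\<Prod>k<c. w (Suc k) ^ size (qs ! k)))"
    using finite_pods finite_colored_pods by (simp add: sum.Sigma split_beta)
  also have "\<dots> = (\<Sum>ps\<in>colored_pods (Suc c) n. \<Prod>k<Suc c. w k ^ size (ps ! k))"
    by (rule sum_colored_pods_Suc[symmetric])
  finally show ?case ..
qed

section \<open>Products over the roots of unity\<close>

lemma prod_roots_unity_minus:
  assumes "0 < t"
  shows "(\<Prod>z\<in>{z::complex. z ^ t = 1}. v - z) = v ^ t - 1"
proof -
  define p :: "complex poly" where "p = [:-1:] + monom 1 t"
  have poly_p: "poly p v = v ^ t - 1" for v by (simp add: p_def poly_monom)
  have "lead_coeff p = 1" using assms unfolding p_def
    by (subst lead_coeff_add_le) (auto simp: degree_monom_eq)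
  have "poly (pderiv p) a = of_nat t * a ^ (t - 1)" for a
    by (simp add: p_def pderiv_add pderiv_monom poly_monom)
  hence "rsquarefree p"
    using assms by (auto simp: rsquarefree_roots poly_p power_0_left)
  hence "(\<Prod>z | poly p z = 0. [:-z, 1:]) = p"
    using complex_poly_decompose_rsquarefree \<open>lead_coeff p = 1\<close> by (metis smult_1_left)
  hence "poly (\<Prod>z | poly p z = 0. [:-z, 1:]) v = poly p v" by simp
  moreover have "{z. poly p z = 0} = {z. z ^ t = 1}" by (auto simp: poly_p)
  ultimately show ?thesis by (simp add: poly_prod poly_p)
qed

lemma prod_roots_unity_one_minus:
  assumes "0 < t"
  shows "(\<Prod>z\<in>{z::complex. z ^ t = 1}. 1 - w * z) = 1 - w ^ t"
proof (cases "w = 0")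
  case False
  let ?U = "{z::complex. z ^ t = 1}"
  have "(\<Prod>z\<in>?U. 1 - w * z) = (\<Prod>z\<in>?U. w * (inverse w - z))"
    using False by (intro prod.cong refl) (simp add: algebra_simps)
  also have "\<dots> = w ^ t * (inverse w ^ t - 1)"
    using assms by (simp add: prod.distrib card_roots_unity_eq prod_roots_unity_minus)
  also have "\<dots> = 1 - w ^ t" using False by (simp add: algebra_simps power_mult_distrib[symmetric])
  finally show ?thesis .
qed (use assms in simp)

lemma prod_roots_unity_fps:
  assumes "0 < t" and "Y $ 0 = 0"
  shows "(\<Prod>z\<in>{z::complex. z ^ t = 1}. 1 - fps_const z * Y) = 1 - Y ^ t"
proof -
  let ?U = "{z::complex. z ^ t = 1}"
  have "poly (\<Prod>z\<in>?U. [:1, -z:]) = poly (1 - monom 1 t)"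
    by (rule ext) (simp add: poly_prod prod_roots_unity_one_minus[OF assms(1)] poly_monom algebra_simps)
  hence poly_id: "(\<Prod>z\<in>?U. [:1, -z:]) = 1 - monom 1 t" by (simp add: poly_eq_poly_eq_iff)
  have linear: "fps_of_poly [:1, -z:] oo Y = 1 - fps_const z * Y" for z :: complex
  proof -
    have "fps_of_poly [:1, -z:] = 1 - fps_const z * fps_X"
      by (rule fps_ext) (simp add: coeff_pCons split: nat.split)
    thus ?thesis using assms(2)
      by (simp only: fps_compose_sub_distrib fps_compose_mult_distrib fps_compose_1
          fps_const_compose fps_X_fps_compose_startby0)
  qed
  have "(\<Prod>z\<in>?U. 1 - fps_const z * Y) = fps_of_poly (\<Prod>z\<in>?U. [:1, -z:]) oo Y"
    using assms(2) by (simp add: linear fps_of_poly_prod fps_compose_prod_distrib)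
  also have "fps_of_poly (\<Prod>z\<in>?U. [:1, -z:]) = 1 - fps_X ^ t"
    unfolding poly_id by (rule fps_ext) (simp add: coeff_monom)
  also have "(1 - fps_X ^ t) oo Y = 1 - Y ^ t"
    using assms(2) by (simp add: fps_compose_sub_distrib fps_compose_power[symmetric])
  finally show ?thesis .
qed

lemma prod_roots_unity_pod_factor:
  assumes "odd t" and "0 < s"
  shows "(\<Prod>z\<in>{z::complex. z ^ t = 1}. pod_factor z s) = pod_factor 1 (t * s)"
proof -
  let ?U = "{z::complex. z ^ t = 1}"
  have "0 < t" using assms(1) by (cases t) auto
  show ?thesis
  proof (cases "odd s")
    case True
    have "(\<Prod>z\<in>?U. pod_factor z s) = (\<Prod>z\<in>?U. 1 - fps_const z * - (fps_X ^ s))"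
      using True by (simp add: pod_factor_odd)
    also have "\<dots> = 1 - (- (fps_X ^ s)) ^ t"
      using \<open>0 < t\<close> \<open>0 < s\<close> by (intro prod_roots_unity_fps) simp_all
    also have "\<dots> = pod_factor 1 (t * s)"
      using True assms(1) by (simp add: pod_factor_odd power_mult[symmetric] mult.commute)
    finally show ?thesis .
  next
    case False
    have "even (t * s)" "0 < t * s" using False \<open>0 < t\<close> \<open>0 < s\<close> by auto
    have "(\<Prod>z\<in>?U. pod_factor z s) * (1 - fps_X ^ (t * s))
        = (\<Prod>z\<in>?U. pod_factor z s * (1 - fps_const z * fps_X ^ s))"
      using \<open>0 < t\<close> \<open>0 < s\<close>
      by (simp add: prod.distrib prod_roots_unity_fps power_mult[symmetric] mult.commute)
    also have "\<dots> = pod_factor 1 (t * s) * (1 - fps_X ^ (t * s))"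
      using pod_factor_even[OF \<open>even (t * s)\<close> \<open>0 < t * s\<close>, of 1] False \<open>0 < s\<close>
      by (simp add: pod_factor_even)
    moreover have "1 - fps_X ^ (t * s) \<noteq> (0 :: complex fps)"
    proof
      assume "1 - fps_X ^ (t * s) = (0 :: complex fps)"
      hence "fps_nth (1 - fps_X ^ (t * s) :: complex fps) 0 = fps_nth 0 0" by (rule arg_cong)
      thus False using \<open>0 < t * s\<close> by simp
    qed
    ultimately show ?thesis by simp
  qed
qed

definition fps_supp_dvd :: "nat \<Rightarrow> 'a::zero fps \<Rightarrow> bool" where
  "fps_supp_dvd t f \<longleftrightarrow> (\<forall>i. \<not> t dvd i \<longrightarrow> f $ i = 0)"

lemma fps_supp_dvd_1 [simp]: "fps_supp_dvd t 1"
  by (simp add: fps_supp_dvd_def)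

lemma fps_supp_dvd_mult:
  fixes f :: "'a::comm_semiring_1 fps"
  assumes "fps_supp_dvd t f" "fps_supp_dvd t g" shows "fps_supp_dvd t (f * g)"
  unfolding fps_supp_dvd_def fps_mult_nth
proof (intro allI impI sum.neutral ballI)
  fix i j assume "\<not> t dvd i" and "j \<in> {0..i}"
  hence "\<not> t dvd j \<or> \<not> t dvd (i - j)" by (metis atLeastAtMost_iff dvd_add le_add_diff_inverse)
  thus "f $ j * g $ (i - j) = 0" using assms by (auto simp: fps_supp_dvd_def)
qed

lemma fps_supp_dvd_prod:
  fixes f :: "'b \<Rightarrow> 'a::comm_semiring_1 fps"
  shows "(\<And>s. s \<in> A \<Longrightarrow> fps_supp_dvd t (f s)) \<Longrightarrow> fps_supp_dvd t (\<Prod>s\<in>A. f s)"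
  by (induction A rule: infinite_finite_induct) (auto intro: fps_supp_dvd_mult)

lemma fps_supp_dvd_prod_roots_unity_pod_prod:
  assumes "odd t"
  shows "fps_supp_dvd t (\<Prod>z\<in>{z::complex. z ^ t = 1}. pod_prod z L)"
proof -
  have "(\<Prod>z\<in>{z::complex. z ^ t = 1}. pod_prod z L) = (\<Prod>s\<in>{1..L}. pod_factor 1 (t * s))"
    unfolding pod_prod_def using assms
    by (subst prod.swap) (intro prod.cong refl prod_roots_unity_pod_factor; simp)
  moreover have "fps_supp_dvd t (pod_factor (1::complex) (t * s))" for s
    by (auto simp: fps_supp_dvd_def pod_factor_nth dest: dvd_mult_left)
  ultimately show ?thesis by (simp add: fps_supp_dvd_prod)
qed

section \<open>The reciprocal of the pod generating function\<close>

text \<open>Substituting \<open>-q\<close> for \<open>q\<close> turns Gauss's identity into a statement about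
  \<open>1 / pod(q)\<close>, whose coefficients are therefore supported on the triangular numbers.\<close>

lemma fps_compose_neg_X_nth: "(f oo - fps_X) $ n = (- 1) ^ n * (f $ n :: 'a::comm_ring_1)"
  by (simp add: fps_compose_uminus')

lemma fps_compose_neg_X_mult: "(f * g) oo - fps_X = (f oo - fps_X) * (g oo - fps_X :: 'a::idom fps)"
  by (simp add: fps_compose_mult_distrib)

lemma fps_compose_neg_X_prod:
  "(\<Prod>a\<in>A. f a) oo - fps_X = (\<Prod>a\<in>A. f a oo - fps_X :: 'a::idom fps)"
  by (simp add: fps_compose_prod_distrib)

lemma fps_compose_neg_X_neg_X [simp]: "(f oo - fps_X) oo - fps_X = (f :: 'a::comm_ring_1 fps)"
  by (rule fps_ext) (simp add: fps_compose_neg_X_nth power_mult_distrib[symmetric])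

lemma fps_eq_upto_compose_neg_X:
  "fps_eq_upto N f g \<Longrightarrow> fps_eq_upto N (f oo - fps_X) (g oo - fps_X :: 'a::comm_ring_1 fps)"
  by (simp add: fps_eq_upto_def fps_compose_neg_X_nth)

lemma one_minus_X_power_compose_neg_X:
  "even s \<Longrightarrow> (1 - fps_X ^ s) oo - fps_X = (1 - fps_X ^ s :: 'a::comm_ring_1 fps)"
  by (rule fps_ext) (auto simp: fps_compose_neg_X_nth)

lemma one_plus_X_power_compose_neg_X:
  "odd s \<Longrightarrow> (1 + fps_X ^ s) oo - fps_X = (1 - fps_X ^ s :: 'a::comm_ring_1 fps)"
  by (rule fps_ext) (use odd_pos[of s] in \<open>auto simp: fps_compose_neg_X_nth\<close>)

lemma pod_prod_compose_neg_X_mult_even_qpoch: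
  "(pod_prod 1 (2 * m) oo - fps_X) * even_qpoch m = (odd_qpoch m :: 'a::idom fps)"
proof -
  have odd: "pod_factor 1 (2 * i - 1) oo - fps_X = (1 - fps_X ^ (2 * i - 1) :: 'a fps)"
    if "i \<in> {1..m}" for i
    using that by (simp add: pod_factor_odd one_plus_X_power_compose_neg_X)
  have even: "(pod_factor 1 (2 * i) oo - fps_X) * (1 - fps_X ^ (2 * i)) = (1 :: 'a fps)"
    if "i \<in> {1..m}" for i
  proof -
    have "(pod_factor 1 (2 * i) oo - fps_X) * (1 - fps_X ^ (2 * i))
        = (pod_factor 1 (2 * i) * (1 - fps_X ^ (2 * i))) oo - (fps_X :: 'a fps)"
      by (simp add: fps_compose_neg_X_mult one_minus_X_power_compose_neg_X)
    also have "\<dots> = 1" using that pod_factor_even[of "2 * i" "1 :: 'a"] by simp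
    finally show ?thesis .
  qed
  have "(pod_prod 1 (2 * m) oo - fps_X) * even_qpoch m
      = (\<Prod>i\<in>{1..m}. pod_factor 1 (2 * i - 1) oo - fps_X) *
        (\<Prod>i\<in>{1..m}. (pod_factor 1 (2 * i) oo - fps_X) * (1 - fps_X ^ (2 * i)) :: 'a fps)"
    unfolding pod_prod_def prod_odd_even_split fps_compose_neg_X_mult fps_compose_neg_X_prod
      even_qpoch_def prod.distrib by (simp add: mult.assoc)
  also have "\<dots> = odd_qpoch m * 1"
    unfolding odd_qpoch_def using odd even by (intro arg_cong2[where f = times] prod.cong prod.neutral) auto
  finally show ?thesis by simp
qed

text \<open>Each triangular number \<open>T(k) = T(-1 - k)\<close> occurs twice in \<open>theta_sum\<close>, hence the
  factor \<open>1/2\<close>.\<close>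

lemma pod_prod_mult_theta_sum_eq_upto:
  "fps_eq_upto n (pod_prod 1 (2 * n) *
     ((fps_const (1 / 2) * theta_sum (2 * n + 2)) oo - fps_X)) (1 :: 'a::field_char_0 fps)"
proof -
  let ?P = "pod_prod 1 (2 * n) oo - fps_X :: 'a fps" and ?\<theta> = "theta_sum (2 * n + 2) :: 'a fps"
  have "fps_eq_upto n (odd_qpoch n * ?\<theta>) (2 * even_qpoch n)"
    by (rule gauss_identity_eq_upto) simp_all
  hence "fps_eq_upto n (?P * ?\<theta> * even_qpoch n) (2 * even_qpoch n)"
    by (simp add: pod_prod_compose_neg_X_mult_even_qpoch[symmetric] mult_ac)
  hence "fps_eq_upto n (?P * ?\<theta>) 2"
    by (rule fps_eq_upto_cancel[rotated]) simp
  hence "fps_eq_upto n (?P * ?\<theta> * fps_const (1 / 2)) (2 * fps_const (1 / 2))"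
    by (rule fps_eq_upto_mult_right)
  moreover have "2 * fps_const (1 / 2) = (1 :: 'a fps)"
    by (simp add: fps_numeral_fps_const fps_const_mult[symmetric])
  ultimately have "fps_eq_upto n (?P * (fps_const (1 / 2) * ?\<theta>)) 1"
    by (simp add: mult_ac)
  hence "fps_eq_upto n ((?P * (fps_const (1 / 2) * ?\<theta>)) oo - fps_X) (1 oo - fps_X)"
    by (rule fps_eq_upto_compose_neg_X)
  thus ?thesis by (simp add: fps_compose_neg_X_mult)
qed

section \<open>Characters of the multirank\<close>

definition unity_root :: "nat \<Rightarrow> int \<Rightarrow> complex" where
  "unity_root t m = cis (2 * pi * of_int m / of_nat t)"

lemma unity_root_add: "unity_root t (a + b) = unity_root t a * unity_root t b"
  by (simp add: unity_root_def cis_mult add_divide_distrib distrib_left)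

lemma unity_root_0 [simp]: "unity_root t 0 = 1"
  by (simp add: unity_root_def)

lemma unity_root_nonzero [simp]: "unity_root t a \<noteq> 0"
  by (simp add: unity_root_def)

lemma unity_root_mult_of_nat: "unity_root t (a * int l) = unity_root t a ^ l"
  by (simp add: unity_root_def DeMoivre mult_ac)

lemma unity_root_sum: "unity_root t (\<Sum>a\<in>A. f a) = (\<Prod>a\<in>A. unity_root t (f a))"
  by (induction A rule: infinite_finite_induct) (auto simp: unity_root_add)

lemma unity_root_eq_1_iff:
  assumes "0 < t" shows "unity_root t m = 1 \<longleftrightarrow> int t dvd m"
proof
  assume "unity_root t m = 1"
  hence "cos (2 * pi * of_int m / of_nat t) = 1"
    unfolding unity_root_def by (metis cis.sel(1) one_complex.sel(1))
  then obtain k :: int where "2 * pi * of_int m / of_nat t = of_int k * 2 * pi"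
    by (auto simp: cos_one_2pi_int)
  hence "real_of_int m = real_of_int (k * int t)" using assms by (simp add: field_simps)
  hence "m = k * int t" by (simp only: of_int_eq_iff)
  thus "int t dvd m" by simp
next
  assume "int t dvd m"
  then obtain k where "m = int t * k" by blast
  hence "2 * pi * of_int m / of_nat t = 2 * pi * of_int k" using assms by simp
  thus "unity_root t m = 1" by (simp add: unity_root_def)
qed

lemma unity_root_cong:
  assumes "0 < t" "[a = b] (mod int t)" shows "unity_root t a = unity_root t b"
proof -
  have "unity_root t (a - b) = 1"
    using assms by (simp add: unity_root_eq_1_iff cong_iff_dvd_diff)
  thus ?thesis using unity_root_add[of t "a - b" b] by simp
qed

lemma sum_unity_root_multiples:
  assumes "0 < t"
  shows "(\<Sum>j<t. unity_root t (int j * m)) = (if int t dvd m then of_nat t else 0)"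
proof (cases "int t dvd m")
  case True
  hence "unity_root t (int j * m) = 1" for j
    using assms by (simp add: unity_root_eq_1_iff)
  thus ?thesis using True by simp
next
  case False
  have "(\<Sum>j<t. unity_root t (int j * m)) = (\<Sum>j<t. unity_root t m ^ j)"
    by (simp add: unity_root_mult_of_nat[symmetric] mult.commute)
  also have "\<dots> = (unity_root t m ^ t - 1) / (unity_root t m - 1)"
    using False assms by (intro geometric_sum) (simp add: unity_root_eq_1_iff)
  also have "unity_root t m ^ t = 1"
    using assms by (simp add: unity_root_mult_of_nat[symmetric] unity_root_eq_1_iff)
  finally show ?thesis using False by simp
qed

lemma bij_betw_unity_root_mult:
  assumes "prime t" "\<not> t dvd j"
  shows "bij_betw (\<lambda>k. unity_root t (int j * int k)) {..<t} {z. z ^ t = 1}"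
proof -
  have "0 < t" using assms(1) prime_gt_0_nat by blast
  have "inj_on (\<lambda>k. unity_root t (int j * int k)) {..<t}"
  proof (rule inj_onI)
    fix a b assume ab: "a \<in> {..<t}" "b \<in> {..<t}"
      and "unity_root t (int j * int a) = unity_root t (int j * int b)"
    hence "unity_root t (int j * (int a - int b)) = 1"
      using unity_root_add[of t "int j * (int a - int b)" "int j * int b"]
      by (simp add: algebra_simps)
    hence "int t dvd int j * (int a - int b)" using \<open>0 < t\<close> by (simp add: unity_root_eq_1_iff)
    hence "int t dvd (int a - int b)"
      using assms by (simp add: prime_dvd_mult_iff int_dvd_int_iff)
    moreover have "\<bar>int a - int b\<bar> < int t" using ab by auto
    ultimately have "int a - int b = 0"
      using dvd_imp_le_int[of "int a - int b" "int t"] by (cases "int a - int b = 0") auto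
    thus "a = b" by simp
  qed
  moreover have "(\<lambda>k. unity_root t (int j * int k)) ` {..<t} \<subseteq> {z. z ^ t = 1}"
  proof safe
    fix k
    have "unity_root t (int j * int k) ^ t = unity_root t (int t * (int j * int k))"
      by (simp add: unity_root_mult_of_nat[symmetric] mult_ac)
    thus "unity_root t (int j * int k) ^ t = 1" using \<open>0 < t\<close> by (simp add: unity_root_eq_1_iff)
  qed
  moreover have "card ((\<lambda>k. unity_root t (int j * int k)) ` {..<t}) = card {z::complex. z ^ t = 1}"
    using calculation(1) card_image card_roots_unity_eq[OF \<open>0 < t\<close>] by fastforce
  ultimately show ?thesis
    using card_subset_eq[OF finite_roots_unity[of t]] \<open>0 < t\<close> by (simp add: bij_betw_def)
qed

text \<open>Since \<open>t - k \<equiv> -k (mod t)\<close>, the character \<open>\<zeta>^(j r)\<close> of the multirank \<open>r\<close> factors over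
  the colours: colour \<open>k + 1\<close> contributes \<open>\<zeta>^(j (k + 1))\<close> per part.\<close>

lemma unity_root_multirank:
  assumes "odd t"
  shows "unity_root t (int j * multirank t ps) =
    (\<Prod>k<t - 1. unity_root t (int j * (int k + 1)) ^ size (ps ! k))"
proof -
  define h where "h = (t - 1) div 2"
  have t: "t = 2 * h + 1" using assms by (simp add: h_def)
  let ?w = "\<lambda>m. unity_root t (int j * int m)" and ?l = "\<lambda>k. size (ps ! k)"
  have "unity_root t (int j * multirank t ps) =
      unity_root t (\<Sum>k\<in>{1..h}. int j * int k * int (?l (k - 1)) + - (int j * int k) * int (?l (t - k - 1)))"
    unfolding multirank_def pod_len_def h_def[symmetric] sum_distrib_left by (simp add: algebra_simps)
  also have "\<dots> = (\<Prod>k\<in>{1..h}. ?w k ^ ?l (k - 1) * ?w (t - k) ^ ?l (t - k - 1))"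
  proof (simp only: unity_root_sum unity_root_add, intro prod.cong refl)
    fix k assume "k \<in> {1..h}"
    hence "- (int j * int k) - int j * int (t - k) = int t * (- int j)"
      using t by (simp add: of_nat_diff algebra_simps)
    hence "[- (int j * int k) = int j * int (t - k)] (mod int t)"
      by (simp add: cong_iff_dvd_diff)
    hence "unity_root t (- (int j * int k)) = ?w (t - k)" using t by (simp add: unity_root_cong)
    thus "unity_root t (int j * int k * int (?l (k - 1))) *
        unity_root t (- (int j * int k) * int (?l (t - k - 1))) =
        ?w k ^ ?l (k - 1) * ?w (t - k) ^ ?l (t - k - 1)"
      by (simp only: unity_root_mult_of_nat)
  qed
  also have "\<dots> = (\<Prod>m\<in>{1..h}. ?w m ^ ?l (m - 1)) * (\<Prod>m\<in>{h + 1..2 * h}. ?w m ^ ?l (m - 1))"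
    by (simp only: prod.distrib, rule arg_cong[where f = "(*) _"],
        rule prod.reindex_bij_witness[where i = "\<lambda>m. t - m" and j = "\<lambda>k. t - k"])
      (auto simp: t)
  also have "\<dots> = (\<Prod>m\<in>{1..2 * h}. ?w m ^ ?l (m - 1))"
    by (subst prod.union_disjoint[symmetric]) (auto intro: prod.cong)
  also have "\<dots> = (\<Prod>k<t - 1. unity_root t (int j * (int k + 1)) ^ ?l k)"
    by (rule prod.reindex_bij_witness[where i = "\<lambda>k. k + 1" and j = "\<lambda>m. m - 1"]) (auto simp: t)
  finally show ?thesis .
qed

section \<open>Equidistribution of the multirank\<close>

text \<open>If \<open>n - i = T(k)\<close> then \<open>8n + 1 = (2k + 1)^2 + 8i\<close>, a square modulo \<open>t\<close> whenever \<open>t dvd i\<close>.\<close>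

lemma legendre_minus_one_imp_not_triangular:
  assumes "Legendre (int (8 * n + 1)) (int t) = -1" "t dvd i" "i \<le> n"
  shows "n - i \<noteq> triangular k"
proof
  assume "n - i = triangular k"
  hence "(2 * k + 1) ^ 2 - int (8 * n + 1) = - 8 * int i"
    using double_triangular[of k] assms(3) by (simp add: power2_eq_square algebra_simps of_nat_diff)
  moreover have "int t dvd - 8 * int i" using assms(2) by simp
  ultimately have "[(2 * k + 1) ^ 2 = int (8 * n + 1)] (mod int t)"
    by (simp add: cong_iff_dvd_diff)
  hence "QuadRes (int t) (int (8 * n + 1))" by (auto simp: QuadRes_def)
  thus False using assms(1) by (simp add: Legendre_def split: if_splits)
qed

lemma fps_supp_dvd_mult_nth_eq_0:
  assumes "fps_supp_dvd t f" and "\<And>i. i \<le> n \<Longrightarrow> t dvd i \<Longrightarrow> g $ (n - i) = 0"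
  shows "(f * g) $ n = (0 :: 'a::comm_semiring_1)"
  unfolding fps_mult_nth
proof (intro sum.neutral ballI)
  fix i assume "i \<in> {0..n}"
  thus "f $ i * g $ (n - i) = 0" using assms by (cases "t dvd i") (auto simp: fps_supp_dvd_def)
qed

lemma prod_pod_prod_unity_root_mult:
  assumes "prime t" "\<not> t dvd j"
  shows "(\<Prod>k<t - 1. pod_prod (unity_root t (int j * (int k + 1))) L) * pod_prod 1 L =
    (\<Prod>z\<in>{z. z ^ t = 1}. pod_prod z L)"
proof -
  have "t = Suc (t - 1)" using assms(1) prime_gt_0_nat by simp
  have "(\<Prod>k<t - 1. pod_prod (unity_root t (int j * (int k + 1))) L) * pod_prod 1 L
      = (\<Prod>k<Suc (t - 1). pod_prod (unity_root t (int j * int k)) L)"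
    unfolding prod.lessThan_Suc_shift by (simp add: mult.commute add.commute)
  also have "\<dots> = (\<Prod>k<t. pod_prod (unity_root t (int j * int k)) L)"
    using \<open>t = Suc (t - 1)\<close> by simp
  also have "\<dots> = (\<Prod>z\<in>{z. z ^ t = 1}. pod_prod z L)"
    by (rule prod.reindex_bij_betw[OF bij_betw_unity_root_mult[OF assms]])
  finally show ?thesis .
qed

lemma sum_colored_pods_unity_root_multirank_eq_0:
  assumes "prime t" "odd t" "Legendre (int (8 * n + 1)) (int t) = -1" "\<not> t dvd j"
  shows "(\<Sum>ps\<in>colored_pods (t - 1) n. unity_root t (int j * multirank t ps)) = 0"
proof -
  define w where "w k = unity_root t (int j * (int k + 1))" for k
  let ?V = "\<Prod>k<t - 1. pod_gf (w k)" and ?V' = "\<Prod>k<t - 1. pod_prod (w k) (2 * n)"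
    and ?Z = "\<Prod>z\<in>{z::complex. z ^ t = 1}. pod_prod z (2 * n)"
    and ?G = "(fps_const (1 / 2) * theta_sum (2 * n + 2)) oo - fps_X :: complex fps"
  have "(\<Sum>ps\<in>colored_pods (t - 1) n. unity_root t (int j * multirank t ps)) = ?V $ n"
    using assms(2) by (simp add: unity_root_multirank w_def sum_colored_pods_eq_nth_prod_pod_gf)
  also have "?V $ n = (?Z * ?G) $ n"
  proof -
    have "fps_eq_upto n ?V (?V * (pod_prod 1 (2 * n) * ?G))"
      using fps_eq_upto_mult_left[OF pod_prod_mult_theta_sum_eq_upto, of n ?V]
      by (simp add: fps_eq_upto_sym)
    also have "fps_eq_upto n (?V * (pod_prod 1 (2 * n) * ?G)) (?V' * (pod_prod 1 (2 * n) * ?G))"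
      by (intro fps_eq_upto_mult_right fps_eq_upto_prod pod_gf_eq_upto_pod_prod) auto
    also have "?V' * (pod_prod 1 (2 * n) * ?G) = ?Z * ?G"
      using prod_pod_prod_unity_root_mult[OF assms(1,4)] by (simp add: w_def mult.assoc)
    finally show ?thesis by (simp add: fps_eq_upto_def)
  qed
  also have "\<dots> = 0"
  proof (rule fps_supp_dvd_mult_nth_eq_0)
    show "fps_supp_dvd t ?Z" using assms(2) by (rule fps_supp_dvd_prod_roots_unity_pod_prod)
    fix i assume "i \<le> n" "t dvd i"
    hence "theta_sum (2 * n + 2) $ (n - i) = (0 :: complex)"
      using legendre_minus_one_imp_not_triangular[OF assms(3)] theta_sum_nth_nonzero_imp by blast
    thus "?G $ (n - i) = 0" by (simp add: fps_compose_neg_X_nth)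
  qed
  finally show ?thesis .
qed

lemma t_mult_N_hat_eq_p_hat:
  assumes "prime t" "odd t" "Legendre (int (8 * n + 1)) (int t) = -1"
  shows "t * N_hat i t n = p_hat (t - 1) n"
proof -
  have "0 < t" using assms(1) prime_gt_0_nat by blast
  let ?C = "colored_pods (t - 1) n"
  let ?S = "\<lambda>j. \<Sum>ps\<in>?C. unity_root t (int j * multirank t ps)"
  have "(of_nat (t * N_hat i t n) :: complex) =
      (\<Sum>ps\<in>?C. if int t dvd (multirank t ps - i) then of_nat t else 0)"
    unfolding N_hat_def using finite_colored_pods
    by (simp add: sum.If_cases cong_iff_dvd_diff mult.commute Int_def)
  also have "\<dots> = (\<Sum>ps\<in>?C. \<Sum>j<t. unity_root t (int j * (multirank t ps - i)))"
    using \<open>0 < t\<close> by (simp add: sum_unity_root_multiples)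
  also have "\<dots> = (\<Sum>j<Suc (t - 1). unity_root t (- (int j * i)) * ?S j)"
    using \<open>0 < t\<close> by (subst sum.swap) (simp add: sum_distrib_left unity_root_add[symmetric] algebra_simps)
  also have "\<dots> = of_nat (p_hat (t - 1) n)"
  proof -
    have "?S (Suc j) = 0" if "j \<in> {..<t - 1}" for j
      using that assms by (intro sum_colored_pods_unity_root_multirank_eq_0) (auto dest: dvd_imp_le)
    hence "(\<Sum>j<t - 1. unity_root t (- (int (Suc j) * i)) * ?S (Suc j)) = 0" by simp
    thus ?thesis unfolding sum.lessThan_Suc_shift by (simp add: p_hat_def)
  qed
  finally show ?thesis by (simp only: of_nat_eq_iff)
qed

theorem theorem2p4:
  fixes t n :: nat
  assumes "prime t" and "odd t"
    and "Legendre (int (8 * n + 1)) (int t) = -1"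
  shows "(\<forall>i::int. 0 \<le> i \<and> i \<le> int t - 1 \<longrightarrow>
            real (N_hat i t n) = real (p_hat (t - 1) n) / real t)
         \<and> t dvd p_hat (t - 1) n"
proof -
  have "0 < t" using assms(1) prime_gt_0_nat by blast
  have count: "t * N_hat i t n = p_hat (t - 1) n" for i
    using t_mult_N_hat_eq_p_hat[OF assms] .
  have "real (N_hat i t n) = real (p_hat (t - 1) n) / real t" for i
    using count[of i, THEN arg_cong[where f = real]] \<open>0 < t\<close> by (simp add: field_simps)
  moreover have "t dvd p_hat (t - 1) n" using count[of 0] by (metis dvd_triv_left)
  ultimately show ?thesis by blast
qed

end
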